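(* Let $M\ge1$ be an integer. There exists a single linear map $\mathcal{U}:\mathcal{B}(\mathcal{H}_M^{\otimes2})\to\mathcal{B}(\mathcal{H}_M^{\otimes2})$ that is unitary with respect to the Hilbert–Schmidt inner product $\langle A,B\rangle=\mathrm{Tr}(A^\dagger B)$ such that $\mathcal{U}(\bar{Q}_f)=U_f$ for every permutation $f$ of $\mathbb{Z}_M$.
   Context: $\mathcal{H}_M$ is an $M$-dimensional Hilbert space with orthonormal basis $\{|x\rangle\}_{x\in\mathbb{Z}_M}$ and $\mathcal{B}(\mathcal{H}_M^{\otimes2})$ denotes the space of linear operators on $\mathcal{H}_M\otimes\mathcal{H}_M$. For a permutation $f$ of $\mathbb{Z}_M$: the standard oracle operator is $U_f$ on $\mathcal{H}_M\otimes\mathcal{H}_M$ with $U_f|x\rangle\otimes|y\rangle=|x\rangle\otimes|y\oplus f(x)\rangle$ ($\oplus$ addition mod $M$); the minimal oracle operator is $Q_f$ on $\mathcal{H}_M$ with $Q_f|x\rangle=|f(x)\rangle$; the entanglement-assisted minimal oracle operator is $\bar{Q}_f=Q_f\otimes\mathbb{1}_M$. *)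

theory Defs
  imports "Jordan_Normal_Form.Matrix" "HOL-Combinatorics.Permutations"
begin

(* Operators on H_M are M x M complex matrices in the basis {|x>}_{x<M};
   operators on H_M (x) H_M are (M*M) x (M*M) matrices, basis |x>(x)|y> having
   index x*M + y (standard Kronecker ordering). Entry (i,j) is <i|A|j>. *)

definition kron :: "complex mat \<Rightarrow> complex mat \<Rightarrow> complex mat" where
  "kron A B = mat (dim_row A * dim_row B) (dim_col A * dim_col B)
     (\<lambda>(i,j). A $$ (i div dim_row B, j div dim_col B) * B $$ (i mod dim_row B, j mod dim_col B))"

definition Qmin :: "nat \<Rightarrow> (nat \<Rightarrow> nat) \<Rightarrow> complex mat" where
  "Qmin M f = mat M M (\<lambda>(i,j). if i = f j then 1 else 0)"

definition Qbar :: "nat \<Rightarrow> (nat \<Rightarrow> nat) \<Rightarrow> complex mat" where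
  "Qbar M f = kron (Qmin M f) (1\<^sub>m M)"

definition Ustd :: "nat \<Rightarrow> (nat \<Rightarrow> nat) \<Rightarrow> complex mat" where
  "Ustd M f = mat (M*M) (M*M) (\<lambda>(i,j).
     if i div M = j div M \<and> i mod M = (j mod M + f (j div M)) mod M then 1 else 0)"

definition mtrace :: "complex mat \<Rightarrow> complex" where
  "mtrace A = (\<Sum>i<dim_row A. A $$ (i,i))"

definition dagger :: "complex mat \<Rightarrow> complex mat" where
  "dagger A = mat (dim_col A) (dim_row A) (\<lambda>(i,j). cnj (A $$ (j,i)))"

definition hs_inner :: "complex mat \<Rightarrow> complex mat \<Rightarrow> complex" where
  "hs_inner A B = mtrace (dagger A * B)"

definition linear_on_ops :: "nat \<Rightarrow> (complex mat \<Rightarrow> complex mat) \<Rightarrow> bool" where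
  "linear_on_ops n T \<longleftrightarrow>
     (\<forall>A \<in> carrier_mat n n. T A \<in> carrier_mat n n) \<and>
     (\<forall>A \<in> carrier_mat n n. \<forall>B \<in> carrier_mat n n. T (A + B) = T A + T B) \<and>
     (\<forall>c. \<forall>A \<in> carrier_mat n n. T (c \<cdot>\<^sub>m A) = c \<cdot>\<^sub>m T A)"

definition hs_unitary :: "nat \<Rightarrow> (complex mat \<Rightarrow> complex mat) \<Rightarrow> bool" where
  "hs_unitary n T \<longleftrightarrow>
     bij_betw T (carrier_mat n n) (carrier_mat n n) \<and>
     (\<forall>A \<in> carrier_mat n n. \<forall>B \<in> carrier_mat n n. hs_inner (T A) (T B) = hs_inner A B)"

end

theory Submission
  imports Defs "HOL-Number_Theory.Cong"
begin

text \<open>Rearranging the entries of a square matrix along a bijection of the index set is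
  linear and preserves the Hilbert-Schmidt inner product, which is the sum of the products
  of corresponding entries. So it suffices to find one such rearrangement of
  (M^2) x (M^2) matrices taking Q_f (x) 1 to U_f for every f, and it can even keep every
  entry in its column. In column (x,y) the only nonzero entry of Q_f (x) 1 is in row
  (f x, y) and that of U_f in row (x, y + f x); the bijection
  (a,b) \<mapsto> (b - y, a - x + y) of Z_M x Z_M maps the latter row to the former,
  whatever the value of f x.\<close>

definition permute_entries :: "nat \<Rightarrow> (nat \<times> nat \<Rightarrow> nat \<times> nat) \<Rightarrow> complex mat \<Rightarrow> complex mat"
  where "permute_entries n \<pi> A = mat n n (\<lambda>ij. A $$ \<pi> ij)"

lemma hs_inner_eq_sum_entries:
  assumes "A \<in> carrier_mat n n" "B \<in> carrier_mat n n"
  shows "hs_inner A B = (\<Sum>ij \<in> {..<n} \<times> {..<n}. cnj (A $$ ij) * B $$ ij)"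
proof -
  have "hs_inner A B = (\<Sum>j<n. \<Sum>i<n. cnj (A $$ (i, j)) * B $$ (i, j))"
    using assms by (auto simp: hs_inner_def mtrace_def dagger_def scalar_prod_def
        atLeast0LessThan intro!: sum.cong)
  also have "\<dots> = (\<Sum>i<n. \<Sum>j<n. cnj (A $$ (i, j)) * B $$ (i, j))"
    by (rule sum.swap)
  finally show ?thesis
    by (simp add: sum.cartesian_product)
qed

lemma linear_on_ops_permute_entries:
  assumes "\<pi> ` ({..<n} \<times> {..<n}) \<subseteq> {..<n} \<times> {..<n}"
  shows "linear_on_ops n (permute_entries n \<pi>)"
proof -
  have "(A + B) $$ \<pi> (i, j) = A $$ \<pi> (i, j) + B $$ \<pi> (i, j)"
    "(c \<cdot>\<^sub>m A) $$ \<pi> (i, j) = c * A $$ \<pi> (i, j)"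
    if AB: "A \<in> carrier_mat n n" "B \<in> carrier_mat n n" and ij: "i < n" "j < n"
    for A B :: "complex mat" and c i j
  proof -
    obtain k l where "\<pi> (i, j) = (k, l)" "k < n" "l < n"
      using assms ij by fastforce
    with AB show "(A + B) $$ \<pi> (i, j) = A $$ \<pi> (i, j) + B $$ \<pi> (i, j)"
      "(c \<cdot>\<^sub>m A) $$ \<pi> (i, j) = c * A $$ \<pi> (i, j)"
      by simp_all
  qed
  then show ?thesis
    by (auto simp: linear_on_ops_def permute_entries_def intro!: eq_matI)
qed

lemma permute_entries_comp:
  assumes "\<pi> ` ({..<n} \<times> {..<n}) \<subseteq> {..<n} \<times> {..<n}"
  shows "permute_entries n \<pi> (permute_entries n \<rho> A) = permute_entries n (\<rho> \<circ> \<pi>) A"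
proof -
  have "mat n n (\<lambda>ij. A $$ \<rho> ij) $$ \<pi> (i, j) = A $$ \<rho> (\<pi> (i, j))"
    if ij: "i < n" "j < n" for i j
  proof -
    obtain k l where "\<pi> (i, j) = (k, l)" "k < n" "l < n"
      using assms ij by fastforce
    then show ?thesis
      by simp
  qed
  then show ?thesis
    by (auto simp: permute_entries_def intro!: eq_matI)
qed

lemma permute_entries_ident:
  assumes "A \<in> carrier_mat n n" "\<And>ij. ij \<in> {..<n} \<times> {..<n} \<Longrightarrow> \<pi> ij = ij"
  shows "permute_entries n \<pi> A = A"
  using assms by (auto simp: permute_entries_def intro!: eq_matI)

lemma hs_unitary_permute_entries:
  assumes bij: "bij_betw \<pi> ({..<n} \<times> {..<n}) ({..<n} \<times> {..<n})"
  shows "hs_unitary n (permute_entries n \<pi>)"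
proof -
  let ?S = "{..<n} \<times> {..<n}"
  let ?\<pi>' = "inv_into ?S \<pi>"
  have bij': "bij_betw ?\<pi>' ?S ?S"
    using bij by (rule bij_betw_inv_into)
  have "bij_betw (permute_entries n \<pi>) (carrier_mat n n) (carrier_mat n n)"
  proof (rule bij_betw_byWitness [where f' = "permute_entries n ?\<pi>'"])
    show "\<forall>A \<in> carrier_mat n n. permute_entries n ?\<pi>' (permute_entries n \<pi> A) = A"
      using bij bij' by (auto simp: permute_entries_comp bij_betw_def
          bij_betw_inv_into_right intro!: permute_entries_ident)
    show "\<forall>A \<in> carrier_mat n n. permute_entries n \<pi> (permute_entries n ?\<pi>' A) = A"
      using bij by (auto simp: permute_entries_comp bij_betw_def
          bij_betw_inv_into_left intro!: permute_entries_ident)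
  qed (auto simp: permute_entries_def)
  moreover have "hs_inner (permute_entries n \<pi> A) (permute_entries n \<pi> B) = hs_inner A B"
    if "A \<in> carrier_mat n n" "B \<in> carrier_mat n n" for A B
  proof -
    have "hs_inner (permute_entries n \<pi> A) (permute_entries n \<pi> B)
        = (\<Sum>ij \<in> ?S. cnj (A $$ \<pi> ij) * B $$ \<pi> ij)"
      by (subst hs_inner_eq_sum_entries) (auto simp: permute_entries_def intro!: sum.cong)
    also have "\<dots> = (\<Sum>ij \<in> ?S. cnj (A $$ ij) * B $$ ij)"
      using sum.reindex_bij_betw [OF bij] .
    also have "\<dots> = hs_inner A B"
      using that by (simp add: hs_inner_eq_sum_entries)
    finally show ?thesis .
  qed
  ultimately show ?thesis
    by (simp add: hs_unitary_def)
qed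

lemma cong_add_complement_iff:
  fixes a c x M :: nat
  assumes "x \<le> M"
  shows "[a + (M - x) = c] (mod M) \<longleftrightarrow> [a = c + x] (mod M)"
proof -
  have "[a + (M - x) = c] (mod M) \<longleftrightarrow> [a + (M - x) + x = c + x] (mod M)"
    by (simp add: cong_add_rcancel_nat)
  also have "a + (M - x) + x = a + M"
    using assms by simp
  finally show ?thesis
    by (simp add: cong_def)
qed

lemma digits_eq_iff:
  fixes a b c d M :: nat
  assumes "b < M" "d < M"
  shows "a * M + b = c * M + d \<longleftrightarrow> a = c \<and> b = d"
proof
  assume "a * M + b = c * M + d"
  then have "(a * M + b) div M = (c * M + d) div M" "(a * M + b) mod M = (c * M + d) mod M"
    by simp_all
  with assms show "a = c \<and> b = d"
    by simp
qed simp

lemma digits_lt: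
  fixes a b M :: nat
  assumes "a < M" "b < M"
  shows "a * M + b < M * M"
proof -
  have "a * M + b < (a + 1) * M"
    using assms by simp
  also have "\<dots> \<le> M * M"
    using assms by (intro mult_right_mono) auto
  finally show ?thesis .
qed

text \<open>The row map of column j = x M + y, on rows i = a M + b; the summands M - x and
  M - y stand for -x and -y modulo M.\<close>

definition oracle_row_shift :: "nat \<Rightarrow> nat \<Rightarrow> nat \<Rightarrow> nat" where
  "oracle_row_shift M j i =
     ((i mod M + (M - j mod M)) mod M) * M + (j mod M + i div M + (M - j div M)) mod M"

lemma oracle_row_shift_lt: "0 < M \<Longrightarrow> oracle_row_shift M j i < M * M"
  by (simp add: oracle_row_shift_def digits_lt)

lemma inj_on_oracle_row_shift:
  assumes "0 < M"
  shows "inj_on (oracle_row_shift M j) {..<M * M}"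
proof
  fix i i' assume "i \<in> {..<M * M}" "i' \<in> {..<M * M}"
    and "oracle_row_shift M j i = oracle_row_shift M j i'"
  then have "[i mod M + (M - j mod M) = i' mod M + (M - j mod M)] (mod M)"
    "[j mod M + i div M + (M - j div M) = j mod M + i' div M + (M - j div M)] (mod M)"
    using assms by (simp_all add: oracle_row_shift_def digits_eq_iff cong_def)
  then have "[i mod M = i' mod M] (mod M)" "[i div M = i' div M] (mod M)"
    by (simp_all add: cong_add_rcancel_nat cong_add_lcancel_nat)
  moreover have "i div M < M" "i' div M < M"
    using \<open>i \<in> {..<M * M}\<close> \<open>i' \<in> {..<M * M}\<close> by (simp_all add: less_mult_imp_div_less)
  ultimately show "i = i'"
    using assms by (metis cong_less_modulus_unique_nat div_mult_mod_eq mod_less_divisor)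
qed

lemma oracle_row_shift_eq_iff:
  assumes "0 < M" "i < M * M" "j < M * M" "c < M"
  shows "oracle_row_shift M j i = c * M + j mod M
    \<longleftrightarrow> i div M = j div M \<and> i mod M = (j mod M + c) mod M"
proof -
  have digits: "i div M < M" "j div M < M" "i mod M < M" "j mod M < M"
    using assms by (simp_all add: less_mult_imp_div_less)
  have "(i mod M + (M - j mod M)) mod M = c \<longleftrightarrow> [i mod M + (M - j mod M) = c] (mod M)"
    using assms by (simp add: cong_def)
  also have "\<dots> \<longleftrightarrow> [i mod M = c + j mod M] (mod M)"
    using digits by (intro cong_add_complement_iff) simp
  also have "\<dots> \<longleftrightarrow> i mod M = (j mod M + c) mod M"
    by (simp add: cong_def add.commute)
  finally have row:
    "(i mod M + (M - j mod M)) mod M = c \<longleftrightarrow> i mod M = (j mod M + c) mod M" .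
  have "(j mod M + i div M + (M - j div M)) mod M = j mod M
      \<longleftrightarrow> [j mod M + (i div M + (M - j div M)) = j mod M + 0] (mod M)"
    by (simp only: cong_def add.assoc add_0_right mod_mod_trivial)
  also have "\<dots> \<longleftrightarrow> [i div M + (M - j div M) = 0] (mod M)"
    by (rule cong_add_lcancel_nat)
  also have "\<dots> \<longleftrightarrow> [i div M = 0 + j div M] (mod M)"
    using digits by (intro cong_add_complement_iff) simp
  also have "\<dots> \<longleftrightarrow> i div M = j div M"
    using digits by (simp add: cong_def)
  finally have col:
    "(j mod M + i div M + (M - j div M)) mod M = j mod M \<longleftrightarrow> i div M = j div M" .
  have "oracle_row_shift M j i = c * M + j mod M
      \<longleftrightarrow> (i mod M + (M - j mod M)) mod M = c
        \<and> (j mod M + i div M + (M - j div M)) mod M = j mod M"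
    unfolding oracle_row_shift_def using assms digits by (intro digits_eq_iff) simp_all
  with row col show ?thesis
    by blast
qed

definition oracle_shift :: "nat \<Rightarrow> nat \<times> nat \<Rightarrow> nat \<times> nat" where
  "oracle_shift M = (\<lambda>(i, j). (oracle_row_shift M j i, j))"

lemma bij_betw_oracle_shift:
  assumes "0 < M"
  shows "bij_betw (oracle_shift M) ({..<M * M} \<times> {..<M * M}) ({..<M * M} \<times> {..<M * M})"
proof -
  let ?S = "{..<M * M} \<times> {..<M * M}"
  have maps: "oracle_shift M ` ?S \<subseteq> ?S"
    using assms by (auto simp: oracle_shift_def oracle_row_shift_lt)
  have "inj_on (oracle_shift M) ?S"
    using inj_on_oracle_row_shift [OF assms] by (auto simp: oracle_shift_def inj_on_def)
  with maps show ?thesis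
    by (simp add: bij_betw_def endo_inj_surj)
qed

lemma index_Qbar:
  assumes "k < M * M" "j < M * M"
  shows "Qbar M f $$ (k, j) = (if k = f (j div M) * M + j mod M then 1 else 0)"
proof -
  have "0 < M"
    using assms by (cases "M = 0") simp_all
  moreover have "k div M < M" "j div M < M"
    using assms by (simp_all add: less_mult_imp_div_less)
  moreover have
    "k = f (j div M) * M + j mod M \<longleftrightarrow> k div M = f (j div M) \<and> k mod M = j mod M"
    using digits_eq_iff [of "k mod M" M "j mod M" "k div M" "f (j div M)"] \<open>0 < M\<close>
    by simp
  ultimately show ?thesis
    using assms by (simp add: Qbar_def kron_def Qmin_def)
qed

lemma permute_entries_oracle_shift_Qbar:
  assumes "0 < M" "\<And>x. x < M \<Longrightarrow> f x < M"
  shows "permute_entries (M * M) (oracle_shift M) (Qbar M f) = Ustd M f"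
proof (rule eq_matI)
  fix i j assume "i < dim_row (Ustd M f)" "j < dim_col (Ustd M f)"
  then have ij: "i < M * M" "j < M * M"
    by (simp_all add: Ustd_def)
  then have "f (j div M) < M"
    using assms(2) by (simp add: less_mult_imp_div_less)
  have "permute_entries (M * M) (oracle_shift M) (Qbar M f) $$ (i, j)
      = Qbar M f $$ (oracle_row_shift M j i, j)"
    using ij by (simp add: permute_entries_def oracle_shift_def)
  also have "\<dots> = (if oracle_row_shift M j i = f (j div M) * M + j mod M then 1 else 0)"
    using ij assms(1) by (simp add: index_Qbar oracle_row_shift_lt)
  also have "\<dots> = Ustd M f $$ (i, j)"
    using ij oracle_row_shift_eq_iff [OF assms(1) ij \<open>f (j div M) < M\<close>]
    by (simp add: Ustd_def)
  finally show "permute_entries (M * M) (oracle_shift M) (Qbar M f) $$ (i, j)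
      = Ustd M f $$ (i, j)" .
qed (simp_all add: permute_entries_def Ustd_def)

theorem theorem7:
  fixes M :: nat
  assumes "M \<ge> 1"
  shows "\<exists>T :: complex mat \<Rightarrow> complex mat.
           linear_on_ops (M*M) T \<and> hs_unitary (M*M) T \<and>
           (\<forall>f. f permutes {..<M} \<longrightarrow> T (Qbar M f) = Ustd M f)"
proof (intro exI conjI allI impI)
  have M: "0 < M"
    using assms by simp
  then have bij:
    "bij_betw (oracle_shift M) ({..<M * M} \<times> {..<M * M}) ({..<M * M} \<times> {..<M * M})"
    by (rule bij_betw_oracle_shift)
  then show "linear_on_ops (M * M) (permute_entries (M * M) (oracle_shift M))"
    by (intro linear_on_ops_permute_entries) (simp add: bij_betw_def)
  show "hs_unitary (M * M) (permute_entries (M * M) (oracle_shift M))"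
    using bij by (rule hs_unitary_permute_entries)
  fix f :: "nat \<Rightarrow> nat"
  assume "f permutes {..<M}"
  then show "permute_entries (M * M) (oracle_shift M) (Qbar M f) = Ustd M f"
    using M by (intro permute_entries_oracle_shift_Qbar) (auto dest: permutes_in_image)
qed

end
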